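(* Let $a=a_1\cdots a_n$ be a signed permutation on $[n]$. Let $b=b_0b_1\cdots b_{2n+1}$ be the sequence on $\{-(n+1),\ldots,-1,0,1,\ldots,n\}$ given by $b_0=0$, $b_{2i-1}=-a_i$, $b_{2i}=a_i$ for $1\le i\le n$, and $b_{2n+1}=-(n+1)$. Let $\theta_1=(b_0,b_1)(b_2,b_3)\cdots(b_{2n},b_{2n+1})$ and $\theta_2=(0,-1)(1,-2)\cdots(n,-n-1)$, permutations of $\{-(n+1),\ldots,n\}$. Then $$d_r(a)\ \ge\ \frac{2n+2-C(\theta_1\theta_2)}{2}.$$
   Context: Permutations are multiplied as composition of maps, $(\sigma\tau)(x)=\sigma(\tau(x))$; $C(\pi)$ is the number of cycles of $\pi$, fixed points included. A signed permutation on $[n]$ is a sequence $a_1\cdots a_n$ with $a_k\in\{\pm1,\ldots,\pm n\}$ such that $|a_1|,\ldots,|a_n|$ is a permutation of $[n]$. A reversal $\varrho_{i,j}$ ($1\le i\le j\le n$) changes $a$ into $a_1\cdots a_{i-1}(-a_j)(-a_{j-1})\cdots(-a_i)a_{j+1}\cdots a_n$. The reversal distance $d_r(a)$ is the minimum number of reversals needed to transform $a$ into $12\cdots n$. *)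

theory Defs
  imports Complex_Main "HOL-Combinatorics.Transposition"
begin

text \<open>Signed permutation a = a_1 ... a_n, represented as a list of integers of length n
  (a_k = a ! (k-1)).\<close>
definition signed_perm :: "nat \<Rightarrow> int list \<Rightarrow> bool" where
  "signed_perm n a \<longleftrightarrow> length a = n \<and> set (map abs a) = {1..int n}"

text \<open>Reversal rho_{i,j} (1-indexed, 1 <= i <= j <= n).\<close>
definition reversal :: "nat \<Rightarrow> nat \<Rightarrow> int list \<Rightarrow> int list" where
  "reversal i j a = take (i - 1) a @ map uminus (rev (take (j - i + 1) (drop (i - 1) a))) @ drop j a"

definition valid_reversal :: "nat \<Rightarrow> nat \<times> nat \<Rightarrow> bool" where
  "valid_reversal n r \<longleftrightarrow> 1 \<le> fst r \<and> fst r \<le> snd r \<and> snd r \<le> n"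

definition apply_reversals :: "int list \<Rightarrow> (nat \<times> nat) list \<Rightarrow> int list" where
  "apply_reversals a rs = foldl (\<lambda>x r. reversal (fst r) (snd r) x) a rs"

definition identity_sp :: "nat \<Rightarrow> int list" where
  "identity_sp n = map int [1..<n+1]"

definition reversal_distance :: "int list \<Rightarrow> nat" where
  "reversal_distance a = (LEAST k. \<exists>rs. length rs = k \<and> (\<forall>r\<in>set rs. valid_reversal (length a) r)
       \<and> apply_reversals a rs = identity_sp (length a))"

definition num_cycles :: "'a set \<Rightarrow> ('a \<Rightarrow> 'a) \<Rightarrow> nat" where
  "num_cycles S f = card {{y. \<exists>k. (f ^^ k) x = y} | x. x \<in> S}"

definition bseq :: "int list \<Rightarrow> nat \<Rightarrow> int" where
  "bseq a m = (let n = length a in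
     if m = 0 then 0
     else if m = 2 * n + 1 then - (int n + 1)
     else if odd m then - (a ! ((m + 1) div 2 - 1))
     else a ! (m div 2 - 1))"

definition theta1 :: "int list \<Rightarrow> int \<Rightarrow> int" where
  "theta1 a = foldr (\<lambda>k f. transpose (bseq a (2 * k)) (bseq a (2 * k + 1)) \<circ> f) [0..<length a + 1] id"

definition theta2 :: "nat \<Rightarrow> int \<Rightarrow> int" where
  "theta2 n = foldr (\<lambda>k f. transpose (int k) (- int k - 1) \<circ> f) [0..<n + 1] id"

end

(*
  Write theta for theta1 a \<circ> theta2 n.  A reversal rho_{i,j} acts on b by reversing the segment
  b_{2i-1} ... b_{2j} (each a_k occurs in b together with -a_k, so the signs take care of
  themselves).  Hence it replaces the two pairs {b_{2i-2}, b_{2i-1}} and {b_{2j}, b_{2j+1}} of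
  theta1 by {b_{2i-2}, b_{2j+1}} and {b_{2i-1}, b_{2j}}, i.e. theta1 gets multiplied on the
  left by two transpositions.  Multiplying a permutation by a transposition changes its number
  of cycles by at most one, so one reversal increases C(theta) by at most 2.  For the identity
  signed permutation theta1 = theta2, an involution, so theta = id has 2n+2 cycles.  Hence
  2n+2 <= C(theta) + 2 d_r(a).
*)

theory Submission
  imports Defs "HOL-Combinatorics.Orbits"
begin

section \<open>Cycles and transpositions\<close>

lemma num_cycles_eq_card_orbits:
  assumes "f permutes S" "finite S"
  shows "num_cycles S f = card (orbit f ` S)"
proof -
  have perm: "permutation f" using assms permutation_permutes by blast
  have "{{y. \<exists>k. (f ^^ k) x = y} | x. x \<in> S} = orbit f ` S"
    using orbit_altdef_permutation[OF perm] by auto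
  then show ?thesis unfolding num_cycles_def by simp
qed

lemma num_cycles_id: "num_cycles S id = card S"
proof -
  have "{{y. \<exists>k. (id ^^ k) x = y} | x. x \<in> S} = (\<lambda>x. {x}) ` S" by auto
  then show ?thesis unfolding num_cycles_def by (simp add: card_image)
qed

lemma orbits_transpose_comp_subset:
  assumes fin: "finite S" and f: "f permutes S" and pq: "p \<in> S" "q \<in> S"
  defines "g \<equiv> transpose p q \<circ> f"
  shows "orbit g ` S \<subseteq> (orbit f ` S - {orbit f p}) \<union> {orbit g p, orbit g q}"
proof
  have pf: "permutation f" and pg: "permutation g"
    using f fin permutes_compose[OF f permutes_swap_id[OF pq]] permutation_permutes
    unfolding g_def by blast+
  fix C assume "C \<in> orbit g ` S"
  then obtain x where x: "x \<in> S" "C = orbit g x" by auto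
  show "C \<in> (orbit f ` S - {orbit f p}) \<union> {orbit g p, orbit g q}"
  proof (cases "p \<in> orbit g x \<or> q \<in> orbit g x")
    case True
    then show ?thesis
      using x(2) orbit_cyclic_eq3[OF cyclic_on_orbit'[OF pg]] by blast
  next
    case False
    have "orbit f x = orbit g x"
    proof (rule orbit_cong)
      show "x \<in> orbit g x" by (rule permutation_self_in_orbit[OF pg])
    next
      fix s assume "s \<in> orbit g x"
      then have "g s \<notin> {p, q}" using False orbit.step by fastforce
      then show "f s = g s" by (auto simp: g_def transpose_def split: if_splits)
    qed
    moreover have "p \<in> orbit f p" by (rule permutation_self_in_orbit[OF pf])
    ultimately show ?thesis using False x by auto
  qed
qed

lemma num_cycles_transpose_comp_le:
  assumes fin: "finite S" and f: "f permutes S" and pq: "p \<in> S" "q \<in> S"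
  shows "num_cycles S (transpose p q \<circ> f) \<le> num_cycles S f + 1"
proof -
  define g where "g = transpose p q \<circ> f"
  have g: "g permutes S" unfolding g_def by (rule permutes_compose[OF f permutes_swap_id[OF pq]])
  have fin_orbits: "finite (orbit f ` S)" and p_orbit: "orbit f p \<in> orbit f ` S"
    using fin pq by auto
  have "card (orbit g ` S) \<le> card (orbit f ` S - {orbit f p}) + card {orbit g p, orbit g q}"
    using card_mono[OF _ orbits_transpose_comp_subset[OF fin f pq]] card_Un_le fin_orbits le_trans
    unfolding g_def by blast
  also have "\<dots> \<le> card (orbit f ` S) + 1"
  proof -
    have "card {orbit g p, orbit g q} \<le> 2" by (simp add: card_insert_le_m1)
    then show ?thesis using card_Diff1_less[OF fin_orbits p_orbit] by simp
  qed
  finally show ?thesis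
    using num_cycles_eq_card_orbits[OF f fin] num_cycles_eq_card_orbits[OF g fin]
    by (simp add: g_def)
qed

section \<open>Products of disjoint transpositions along a sequence\<close>

definition swap_pairs :: "(nat \<Rightarrow> 'a) \<Rightarrow> nat \<Rightarrow> 'a \<Rightarrow> 'a" where
  "swap_pairs b N = foldr (\<lambda>k f. transpose (b (2 * k)) (b (2 * k + 1)) \<circ> f) [0..<N] id"

definition mate :: "nat \<Rightarrow> nat" where
  "mate m = (if even m then Suc m else m - 1)"

lemma mate_mate [simp]: "mate (mate m) = m"
  by (simp add: mate_def)

lemma mate_less: "m < 2 * N \<Longrightarrow> mate m < 2 * N"
  by (auto simp: mate_def)

lemma mate_diff:
  assumes "odd c" "m \<le> c"
  shows "mate (c - m) = c - mate m"
proof -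
  have "m \<noteq> c" if "even m" using assms that by auto
  moreover have "0 < m" if "odd m" using that by (rule odd_pos)
  ultimately show ?thesis using assms by (auto simp: mate_def)
qed

lemma mate_bounds: "m - 1 \<le> mate m" "mate m \<le> m + 1"
  by (auto simp: mate_def)

lemma foldr_comp_init:
  "foldr (\<lambda>k f. h k \<circ> f) xs g = foldr (\<lambda>k f. h k \<circ> f) xs id \<circ> g"
  by (induction xs) auto

lemma swap_pairs_Suc:
  "swap_pairs b (Suc N) = swap_pairs b N \<circ> transpose (b (2 * N)) (b (2 * N + 1))"
  unfolding swap_pairs_def by (simp add: foldr_comp_init[of _ _ "transpose _ _"])

lemma swap_pairs_cong:
  "(\<And>m. m < 2 * N \<Longrightarrow> b m = c m) \<Longrightarrow> swap_pairs b N = swap_pairs c N"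
  unfolding swap_pairs_def by (intro foldr_cong) auto

lemma swap_pairs_outside:
  "z \<notin> b ` {..<2 * N} \<Longrightarrow> swap_pairs b N z = z"
proof (induction N)
  case 0
  then show ?case by (simp add: swap_pairs_def)
next
  case (Suc N)
  then have "z \<notin> b ` {..<2 * N}" "transpose (b (2 * N)) (b (2 * N + 1)) z = z"
    by (auto simp: transpose_def)
  then show ?case using Suc.IH by (simp add: swap_pairs_Suc)
qed

lemma transpose_inj_on_apply:
  assumes "inj_on b A" "p \<in> A" "q \<in> A" "r \<in> A"
  shows "transpose (b p) (b q) (b r) = b (transpose p q r)"
  using assms by (auto simp: transpose_def inj_on_eq_iff)

lemma swap_pairs_apply:
  assumes "inj_on b {..<2 * N}" "m < 2 * N"
  shows "swap_pairs b N (b m) = b (mate m)"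
  using assms
proof (induction N arbitrary: m)
  case 0
  then show ?case by simp
next
  case (Suc N)
  have inj: "inj_on b {..<2 * N}" using Suc.prems(1) by (rule inj_on_subset) auto
  let ?m' = "transpose (2 * N) (2 * N + 1) m"
  have "swap_pairs b (Suc N) (b m) = swap_pairs b N (b ?m')"
    using Suc.prems by (simp add: swap_pairs_Suc transpose_inj_on_apply)
  also have "\<dots> = b (mate m)"
  proof (cases "m < 2 * N")
    case True
    then show ?thesis using Suc.IH[OF inj] by simp
  next
    case False
    then have "?m' \<ge> 2 * N" "?m' < 2 * Suc N" "?m' = mate m"
      using Suc.prems(2) by (auto simp: mate_def transpose_def)
    moreover from this have "b ?m' \<notin> b ` {..<2 * N}"
      using Suc.prems(1) by (auto simp: inj_on_eq_iff)
    ultimately show ?thesis using swap_pairs_outside by metis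
  qed
  finally show ?case .
qed

lemma swap_pairs_involution:
  assumes "inj_on b {..<2 * N}"
  shows "swap_pairs b N (swap_pairs b N z) = z"
proof (cases "z \<in> b ` {..<2 * N}")
  case True
  then obtain m where "m < 2 * N" "z = b m" by auto
  then show ?thesis using swap_pairs_apply[OF assms] mate_less by simp
next
  case False
  then show ?thesis using swap_pairs_outside by metis
qed

lemma swap_pairs_unique:
  assumes "inj_on b {..<2 * N}" "\<And>m. m < 2 * N \<Longrightarrow> g (b m) = b (mate m)"
    "\<And>z. z \<notin> b ` {..<2 * N} \<Longrightarrow> g z = z"
  shows "swap_pairs b N = g"
proof
  fix z
  show "swap_pairs b N z = g z"
  proof (cases "z \<in> b ` {..<2 * N}")
    case True
    then show ?thesis using swap_pairs_apply[OF assms(1)] assms(2) by auto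
  next
    case False
    then show ?thesis using swap_pairs_outside assms(3) by metis
  qed
qed

lemma swap_pairs_permutes:
  assumes "inj_on b {..<2 * N}" "b ` {..<2 * N} \<subseteq> S"
  shows "swap_pairs b N permutes S"
proof -
  have "swap_pairs b N permutes b ` {..<2 * N}"
    unfolding permutes_def
    using swap_pairs_outside swap_pairs_involution[OF assms(1)] by metis
  then show ?thesis using assms(2) permutes_subset by blast
qed

section \<open>The sequence b and the permutations theta1, theta2\<close>

lemma signed_perm_length: "signed_perm n a \<Longrightarrow> length a = n"
  by (simp add: signed_perm_def)

lemma signed_perm_abs_bounds:
  assumes "signed_perm n a" "k < n"
  shows "1 \<le> \<bar>a ! k\<bar>" "\<bar>a ! k\<bar> \<le> int n"
proof -
  have "\<bar>a ! k\<bar> \<in> set (map abs a)"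
    using assms by (metis length_map nth_map nth_mem signed_perm_def)
  then show "1 \<le> \<bar>a ! k\<bar>" "\<bar>a ! k\<bar> \<le> int n" using assms(1) by (auto simp: signed_perm_def)
qed

lemma signed_perm_abs_inj:
  assumes "signed_perm n a" "k < n" "l < n" "\<bar>a ! k\<bar> = \<bar>a ! l\<bar>"
  shows "k = l"
proof -
  have "distinct (map abs a)"
    using assms(1) by (intro card_distinct) (simp add: signed_perm_def)
  then show ?thesis using assms by (simp add: signed_perm_def nth_eq_iff_index_eq[symmetric])
qed

lemma bseq_first [simp]: "bseq a 0 = 0"
  by (simp add: bseq_def)

lemma bseq_last: "bseq a (2 * length a + 1) = - (int (length a) + 1)"
  by (simp add: bseq_def)

lemma bseq_odd: "k < length a \<Longrightarrow> bseq a (2 * k + 1) = - a ! k"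
  by (simp add: bseq_def)

lemma bseq_even: "k < length a \<Longrightarrow> bseq a (2 * k + 2) = a ! k"
  by (simp add: bseq_def)

lemma bseq_cases:
  assumes "length a = n" "m < 2 * (n + 1)"
  obtains "m = 0" "bseq a m = 0"
    | "m = 2 * n + 1" "bseq a m = - (int n + 1)"
    | k where "k < n" "m = 2 * k + 1" "bseq a m = - a ! k"
    | k where "k < n" "m = 2 * k + 2" "bseq a m = a ! k"
proof -
  have "m = 0 \<or> m = 2 * n + 1 \<or> (\<exists>k<n. m = 2 * k + 1) \<or> (\<exists>k<n. m = 2 * k + 2)"
    using assms(2) by presburger
  then show ?thesis
    using that assms(1) bseq_last[of a] bseq_odd[of _ a] bseq_even[of _ a] by auto
qed

lemma signed_perm_nth_inj:
  "signed_perm n a \<Longrightarrow> k < n \<Longrightarrow> l < n \<Longrightarrow> a ! k = a ! l \<Longrightarrow> k = l"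
  using signed_perm_abs_inj by metis

lemma signed_perm_nth_neq_uminus:
  assumes "signed_perm n a" "k < n" "l < n"
  shows "a ! k \<noteq> - a ! l"
proof
  assume "a ! k = - a ! l"
  then have "k = l" using signed_perm_abs_inj[OF assms] by simp
  with \<open>a ! k = - a ! l\<close> show False using signed_perm_abs_bounds(1)[OF assms(1,2)] by simp
qed

lemma bseq_inj:
  assumes sp: "signed_perm n a"
  shows "inj_on (bseq a) {..<2 * (n + 1)}"
proof (rule inj_onI)
  fix m1 m2 assume "m1 \<in> {..<2 * (n + 1)}" "m2 \<in> {..<2 * (n + 1)}" and eq: "bseq a m1 = bseq a m2"
  then have m: "m1 < 2 * (n + 1)" "m2 < 2 * (n + 1)" by auto
  have len: "length a = n" using signed_perm_length[OF sp] .
  have bounds: "1 \<le> \<bar>a ! k\<bar>" "\<bar>a ! k\<bar> \<le> int n" if "k < n" for k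
    using signed_perm_abs_bounds[OF sp that] by auto
  show "m1 = m2"
    using eq
    by (cases rule: bseq_cases[OF len m(1)]; cases rule: bseq_cases[OF len m(2)])
      (auto dest: bounds signed_perm_nth_inj[OF sp] signed_perm_nth_neq_uminus[OF sp])
qed

lemma bseq_image:
  assumes sp: "signed_perm n a"
  shows "bseq a ` {..<2 * (n + 1)} \<subseteq> {-(int n + 1)..int n}"
proof
  fix z assume "z \<in> bseq a ` {..<2 * (n + 1)}"
  then obtain m where m: "m < 2 * (n + 1)" "z = bseq a m" by auto
  have "- int n \<le> a ! k \<and> a ! k \<le> int n" if "k < n" for k
    using signed_perm_abs_bounds(2)[OF sp that] by auto
  then show "z \<in> {-(int n + 1)..int n}"
    using m by (cases rule: bseq_cases[OF signed_perm_length[OF sp] m(1)]) force+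
qed

lemma theta1_eq_swap_pairs: "theta1 a = swap_pairs (bseq a) (length a + 1)"
  by (simp add: theta1_def swap_pairs_def)

definition zigzag :: "nat \<Rightarrow> int" where
  "zigzag m = (if even m then int (m div 2) else - int (m div 2) - 1)"

lemma theta2_eq_swap_pairs: "theta2 n = swap_pairs zigzag (n + 1)"
  by (simp add: theta2_def swap_pairs_def zigzag_def)

lemma inj_zigzag: "inj zigzag"
proof (rule injI)
  fix x y assume "zigzag x = zigzag y"
  then show "x = y"
    by (cases "even x"; cases "even y") (auto simp: zigzag_def elim!: evenE oddE)
qed

lemma zigzag_image: "zigzag ` {..<2 * (n + 1)} \<subseteq> {-(int n + 1)..int n}"
  unfolding zigzag_def by (auto; linarith)

lemma theta2_permutes: "theta2 n permutes {-(int n + 1)..int n}"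
  unfolding theta2_eq_swap_pairs
  using swap_pairs_permutes[OF inj_on_subset[OF inj_zigzag] zigzag_image] by simp

lemma theta1_permutes: "signed_perm n a \<Longrightarrow> theta1 a permutes {-(int n + 1)..int n}"
  unfolding theta1_eq_swap_pairs
  using swap_pairs_permutes[OF bseq_inj bseq_image] signed_perm_length by metis

lemma length_identity_sp [simp]: "length (identity_sp n) = n"
  by (simp add: identity_sp_def)

lemma nth_identity_sp: "k < n \<Longrightarrow> identity_sp n ! k = int k + 1"
  by (simp add: identity_sp_def del: upt_Suc)

lemma bseq_identity_sp:
  assumes "m < 2 * (n + 1)"
  shows "bseq (identity_sp n) m = zigzag m"
  by (cases rule: bseq_cases[OF length_identity_sp assms]) (simp_all add: nth_identity_sp zigzag_def)

lemma theta1_identity_sp: "theta1 (identity_sp n) = theta2 n"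
  unfolding theta1_eq_swap_pairs theta2_eq_swap_pairs length_identity_sp
  by (rule swap_pairs_cong) (simp add: bseq_identity_sp)

lemma num_cycles_identity_sp:
  "num_cycles {-(int n + 1)..int n} (theta1 (identity_sp n) \<circ> theta2 n) = 2 * n + 2"
proof -
  have "theta2 n \<circ> theta2 n = id"
    unfolding theta2_eq_swap_pairs
    using swap_pairs_involution[OF inj_on_subset[OF inj_zigzag]] by auto
  then show ?thesis by (simp add: theta1_identity_sp num_cycles_id)
qed

section \<open>Effect of a reversal\<close>

lemma length_reversal:
  "valid_reversal (length a) (i, j) \<Longrightarrow> length (reversal i j a) = length a"
  by (auto simp: valid_reversal_def reversal_def)

lemma nth_reversal:
  assumes "valid_reversal (length a) (i, j)" "k < length a"
  shows "reversal i j a ! k = (if i - 1 \<le> k \<and> k \<le> j - 1 then - a ! (i + j - 2 - k) else a ! k)"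
proof -
  let ?pre = "take (i - 1) a" and ?mid = "take (j - i + 1) (drop (i - 1) a)"
  have ij: "1 \<le> i" "i \<le> j" "j \<le> length a" using assms(1) by (auto simp: valid_reversal_def)
  then have len: "length ?pre = i - 1" "length ?mid = j - i + 1" by auto
  consider "k < i - 1" | "i - 1 \<le> k" "k \<le> j - 1" | "j \<le> k" using ij by linarith
  then show ?thesis
  proof cases
    case 1
    then show ?thesis using len by (simp add: reversal_def nth_append)
  next
    case 2
    then have "k - (i - 1) < j - i + 1" using ij by linarith
    then have "reversal i j a ! k = - ?mid ! (j - i + 1 - Suc (k - (i - 1)))"
      using 2 len by (simp add: reversal_def nth_append rev_nth)
    also have "\<dots> = - a ! (i + j - 2 - k)" using 2 ij by simp
    finally show ?thesis using 2 by simp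
  next
    case 3
    then have "\<not> k - (i - 1) < j - i + 1" "k - (i - 1) - (j - i + 1) = k - j"
      "\<not> k < i - 1" "\<not> k \<le> j - 1"
      using ij by linarith+
    then show ?thesis using 3 ij len by (simp add: reversal_def nth_append)
  qed
qed

lemma signed_perm_reversal:
  assumes sp: "signed_perm n a" and v: "valid_reversal n (i, j)"
  shows "signed_perm n (reversal i j a)"
proof -
  have ij: "1 \<le> i" "i \<le> j" "j \<le> n" and len: "length a = n"
    using v sp by (auto simp: valid_reversal_def signed_perm_def)
  have "drop (j - i + 1) (drop (i - 1) a) = drop j a" using ij by simp
  then have "take (j - i + 1) (drop (i - 1) a) @ drop j a = drop (i - 1) a"
    by (metis append_take_drop_id)
  then have "take (i - 1) a @ take (j - i + 1) (drop (i - 1) a) @ drop j a = a" by simp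
  moreover have "set (map abs (reversal i j a))
      = set (map abs (take (i - 1) a @ take (j - i + 1) (drop (i - 1) a) @ drop j a))"
    unfolding reversal_def by (simp add: image_image)
  ultimately have "set (map abs (reversal i j a)) = set (map abs a)" by simp
  then show ?thesis using sp length_reversal[of a i j] v len unfolding signed_perm_def by simp
qed

definition reversal_index :: "nat \<Rightarrow> nat \<Rightarrow> nat \<Rightarrow> nat" where
  "reversal_index i j m = (if 2 * i - 1 \<le> m \<and> m \<le> 2 * j then 2 * i + 2 * j - 1 - m else m)"

lemma reversal_index_less:
  "valid_reversal n (i, j) \<Longrightarrow> m < 2 * (n + 1) \<Longrightarrow> reversal_index i j m < 2 * (n + 1)"
  by (auto simp: reversal_index_def valid_reversal_def)

lemma reversal_index_involution:
  "valid_reversal n (i, j) \<Longrightarrow> reversal_index i j (reversal_index i j m) = m"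
  by (auto simp: reversal_index_def valid_reversal_def)

lemma reversal_index_in_block:
  assumes "1 \<le> i" "i \<le> j" "i - 1 \<le> k" "k \<le> j - 1"
  shows "reversal_index i j (2 * k + 1) = 2 * (i + j - 2 - k) + 2"
    "reversal_index i j (2 * k + 2) = 2 * (i + j - 2 - k) + 1"
proof -
  obtain p where i: "i = Suc p" using assms(1) by (cases i) auto
  obtain d where k: "k = p + d" using le_Suc_ex[of p k] assms(3) i by auto
  have "Suc k \<le> j" using assms(2,4) i by linarith
  then obtain e where "j = Suc k + e" using le_Suc_ex by blast
  with i k show "reversal_index i j (2 * k + 1) = 2 * (i + j - 2 - k) + 2"
    "reversal_index i j (2 * k + 2) = 2 * (i + j - 2 - k) + 1"
    by (simp_all add: reversal_index_def)
qed

lemma reversal_index_off_block: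
  assumes "1 \<le> i" "i \<le> j" "\<not> (i - 1 \<le> k \<and> k \<le> j - 1)"
  shows "reversal_index i j (2 * k + 1) = 2 * k + 1" "reversal_index i j (2 * k + 2) = 2 * k + 2"
  using assms by (auto simp: reversal_index_def)

lemma bseq_reversal:
  assumes v: "valid_reversal (length a) (i, j)" and m: "m < 2 * (length a + 1)"
  shows "bseq (reversal i j a) m = bseq a (reversal_index i j m)"
proof -
  have ij: "1 \<le> i" "i \<le> j" "j \<le> length a" using v by (auto simp: valid_reversal_def)
  have len: "length (reversal i j a) = length a" by (rule length_reversal[OF v])
  have in_block: "i + j - 2 - k < length a" if "i - 1 \<le> k" "k \<le> j - 1" for k
    using ij that by linarith
  show ?thesis
  proof (cases rule: bseq_cases[OF len m])
    case 1
    then show ?thesis using ij by (simp add: reversal_index_def)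
  next
    case 2
    then have "reversal_index i j m = m" using ij by (simp add: reversal_index_def)
    then show ?thesis using 2 bseq_last[of a] by simp
  next
    case (3 k)
    show ?thesis
    proof (cases "i - 1 \<le> k \<and> k \<le> j - 1")
      case True
      then show ?thesis using 3 bseq_even[OF in_block] reversal_index_in_block[OF ij(1,2)]
        by (simp add: nth_reversal[OF v])
    next
      case False
      then show ?thesis using 3 bseq_odd[OF \<open>k < length a\<close>] reversal_index_off_block[OF ij(1,2) False]
        by (auto simp: nth_reversal[OF v])
    qed
  next
    case (4 k)
    show ?thesis
    proof (cases "i - 1 \<le> k \<and> k \<le> j - 1")
      case True
      then show ?thesis using 4 bseq_odd[OF in_block] reversal_index_in_block[OF ij(1,2)]
        by (simp add: nth_reversal[OF v])
    next
      case False
      then show ?thesis using 4 bseq_even[OF \<open>k < length a\<close>] reversal_index_off_block[OF ij(1,2) False]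
        by (auto simp: nth_reversal[OF v])
    qed
  qed
qed

lemma reversal_index_mate:
  assumes ij: "1 \<le> i" "i \<le> j"
  shows "reversal_index i j (mate (reversal_index i j m))
    = transpose (2 * i - 1) (2 * j) (transpose (2 * i - 2) (2 * j + 1) (mate m))"
proof -
  obtain p where i: "i = Suc p" using ij(1) by (cases i) auto
  let ?E = "{2 * p, 2 * p + 1, 2 * j, 2 * j + 1}"
  show ?thesis
  proof (cases "m \<in> ?E")
    case True
    then consider "m = 2 * p" | "m = 2 * p + 1" | "m = 2 * j" | "m = 2 * j + 1" by blast
    then show ?thesis
      using ij unfolding i by cases (simp_all add: reversal_index_def mate_def transpose_def)
  next
    \<comment> \<open>off the four boundary indices, reflection in the odd number 2i + 2j - 1 commutes with mate\<close>
    case False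
    have "mate ` ?E = ?E" by (auto simp: mate_def)
    then have "mate m \<notin> ?E" using False by (metis image_eqI mate_mate)
    then have rhs: "transpose (2 * i - 1) (2 * j) (transpose (2 * i - 2) (2 * j + 1) (mate m)) = mate m"
      unfolding i by (simp add: transpose_def)
    show ?thesis
    proof (cases "2 * i - 1 \<le> m \<and> m \<le> 2 * j")
      case True
      let ?c = "2 * i + 2 * j - 1"
      have "2 * i - 1 \<le> mate m \<and> mate m \<le> 2 * j"
        using True False mate_bounds[of m] \<open>mate m \<notin> ?E\<close> unfolding i by simp linarith
      then have "reversal_index i j (?c - mate m) = mate m"
        using ij unfolding reversal_index_def by auto
      moreover have "mate (?c - m) = ?c - mate m"
        using True ij by (intro mate_diff) auto
      moreover have "reversal_index i j m = ?c - m"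
        using True by (simp add: reversal_index_def)
      ultimately show ?thesis using rhs by simp
    next
      case out: False
      then have "\<not> (2 * i - 1 \<le> mate m \<and> mate m \<le> 2 * j)"
        using False mate_bounds[of m] \<open>mate m \<notin> ?E\<close> unfolding i by simp linarith
      then show ?thesis using out rhs by (auto simp: reversal_index_def)
    qed
  qed
qed

lemma theta1_reversal:
  assumes sp: "signed_perm n a" and v: "valid_reversal n (i, j)"
  shows "theta1 (reversal i j a) = transpose (bseq a (2 * i - 1)) (bseq a (2 * j))
    \<circ> transpose (bseq a (2 * i - 2)) (bseq a (2 * j + 1)) \<circ> theta1 a"
proof -
  define b where "b = bseq a"
  define b' where "b' = bseq (reversal i j a)"
  define I where "I = {..<2 * (n + 1)}"
  let ?\<sigma> = "reversal_index i j"
  have ij: "1 \<le> i" "i \<le> j" "j \<le> n" using v by (auto simp: valid_reversal_def)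
  have len: "length a = n" "length (reversal i j a) = n"
    using sp signed_perm_reversal[OF sp v] by (auto simp: signed_perm_length)
  have inj: "inj_on b I" "inj_on b' I"
    unfolding b_def b'_def I_def using bseq_inj sp signed_perm_reversal[OF sp v] by auto
  have theta: "theta1 a = swap_pairs b (n + 1)" "theta1 (reversal i j a) = swap_pairs b' (n + 1)"
    unfolding b_def b'_def theta1_eq_swap_pairs len by simp_all
  have \<sigma>_in: "?\<sigma> m \<in> I" and mate_in: "mate m \<in> I" if "m \<in> I" for m
    using reversal_index_less[OF v] mate_less[of m "n + 1"] that unfolding I_def by simp_all
  have b'_eq: "b' m = b (?\<sigma> m)" if "m \<in> I" for m
    unfolding b_def b'_def using bseq_reversal that v len unfolding I_def by simp
  have block: "2 * i - 1 \<in> I" "2 * j \<in> I" "2 * i - 2 \<in> I" "2 * j + 1 \<in> I"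
    using ij unfolding I_def by auto
  define g where "g = transpose (b (2 * i - 1)) (b (2 * j)) \<circ> transpose (b (2 * i - 2)) (b (2 * j + 1))
    \<circ> theta1 a"
  show ?thesis
    unfolding theta(2) b_def[symmetric] g_def[symmetric]
  proof (rule swap_pairs_unique[OF inj(2)[unfolded I_def]])
    fix m assume "m < 2 * (n + 1)"
    then have m: "m \<in> I" unfolding I_def by simp
    have "transpose (2 * i - 2) (2 * j + 1) (mate (?\<sigma> m)) \<in> I"
      using block mate_in[OF \<sigma>_in[OF m]] by (simp add: transpose_def)
    then have "g (b' m)
        = b (transpose (2 * i - 1) (2 * j) (transpose (2 * i - 2) (2 * j + 1) (mate (?\<sigma> m))))"
      using theta(1) swap_pairs_apply[OF inj(1)[unfolded I_def]] b'_eq[OF m] \<sigma>_in[OF m]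
        block mate_in[OF \<sigma>_in[OF m]]
      unfolding I_def g_def by (simp add: transpose_inj_on_apply[OF inj(1)[unfolded I_def]])
    also have "\<dots> = b' (mate m)"
      using reversal_index_mate[OF ij(1,2), of "?\<sigma> m"] reversal_index_involution[OF v]
        b'_eq[OF mate_in[OF m]] by simp
    finally show "g (b' m) = b' (mate m)" .
  next
    fix z assume "z \<notin> b' ` {..<2 * (n + 1)}"
    moreover have "b ` I \<subseteq> b' ` I"
      using b'_eq \<sigma>_in reversal_index_involution[OF v] by (metis image_subsetI imageI)
    ultimately have "z \<notin> b ` I" unfolding I_def by blast
    then show "g z = z"
      using theta(1) swap_pairs_outside[of z b "n + 1"] block unfolding I_def g_def
      by (auto simp: transpose_def)
  qed
qed

lemma num_cycles_reversal_le:
  assumes sp: "signed_perm n a" and v: "valid_reversal n (i, j)"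
  shows "num_cycles {-(int n + 1)..int n} (theta1 (reversal i j a) \<circ> theta2 n)
    \<le> num_cycles {-(int n + 1)..int n} (theta1 a \<circ> theta2 n) + 2"
proof -
  define S where "S = {-(int n + 1)..int n}"
  define f where "f = theta1 a \<circ> theta2 n"
  define g where "g = transpose (bseq a (2 * i - 2)) (bseq a (2 * j + 1)) \<circ> f"
  have in_S: "bseq a m \<in> S" if "m < 2 * (n + 1)" for m
    using bseq_image[OF sp] that unfolding S_def by blast
  have ij: "2 * i - 2 < 2 * (n + 1)" "2 * i - 1 < 2 * (n + 1)" "2 * j < 2 * (n + 1)" "2 * j + 1 < 2 * (n + 1)"
    using v by (auto simp: valid_reversal_def)
  have fin: "finite S" unfolding S_def by simp
  have f: "f permutes S"
    unfolding f_def S_def using permutes_compose[OF theta2_permutes theta1_permutes[OF sp]] .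
  have g: "g permutes S"
    unfolding g_def using permutes_compose[OF f permutes_swap_id] in_S ij by simp
  have "theta1 (reversal i j a) \<circ> theta2 n = transpose (bseq a (2 * i - 1)) (bseq a (2 * j)) \<circ> g"
    unfolding g_def f_def theta1_reversal[OF sp v] by (simp add: comp_assoc)
  then have "num_cycles S (theta1 (reversal i j a) \<circ> theta2 n) \<le> num_cycles S g + 1"
    using num_cycles_transpose_comp_le[OF fin g] in_S ij by simp
  also have "num_cycles S g \<le> num_cycles S f + 1"
    unfolding g_def using num_cycles_transpose_comp_le[OF fin f] in_S ij by simp
  finally show ?thesis unfolding S_def f_def by simp
qed

section \<open>Sorting by reversals\<close>

lemma signed_perm_reversals:
  "signed_perm n a \<Longrightarrow> \<forall>r\<in>set rs. valid_reversal n r \<Longrightarrow> signed_perm n (apply_reversals a rs)"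
proof (induction rs arbitrary: a)
  case Nil
  then show ?case by (simp add: apply_reversals_def)
next
  case (Cons r rs)
  then show ?case
    using signed_perm_reversal[of n a "fst r" "snd r"] by (simp add: apply_reversals_def)
qed

lemma reversal_append_right:
  "valid_reversal (length xs) (i, j) \<Longrightarrow> reversal i j (xs @ ys) = reversal i j xs @ ys"
  by (simp add: valid_reversal_def reversal_def)

lemma apply_reversals_append_right:
  "\<forall>r\<in>set rs. valid_reversal (length xs) r \<Longrightarrow>
    apply_reversals (xs @ ys) rs = apply_reversals xs rs @ ys"
proof (induction rs arbitrary: xs)
  case Nil
  then show ?case by (simp add: apply_reversals_def)
next
  case (Cons r rs)
  obtain i j where r: "r = (i, j)" by fastforce
  have v: "valid_reversal (length xs) (i, j)" using Cons.prems r by simp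
  then have "apply_reversals (reversal i j xs @ ys) rs = apply_reversals (reversal i j xs) rs @ ys"
    using Cons.IH[of "reversal i j xs"] Cons.prems length_reversal[OF v] by simp
  then show ?case using r reversal_append_right[OF v] by (simp add: apply_reversals_def)
qed

lemma signed_perm_snoc:
  assumes "signed_perm (Suc n) (xs @ [int (Suc n)])"
  shows "signed_perm n xs"
proof -
  have len: "length xs = n" using assms by (simp add: signed_perm_def)
  have "int (Suc n) \<notin> abs ` set xs"
  proof
    assume "int (Suc n) \<in> abs ` set xs"
    then obtain k where "k < n" "\<bar>xs ! k\<bar> = int (Suc n)" using len by (auto simp: in_set_conv_nth)
    then show False
      using signed_perm_abs_inj[OF assms, of k n] len by (simp add: nth_append)
  qed
  moreover have "abs ` set xs \<union> {int (Suc n)} = {1..int (Suc n)}"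
    using assms by (simp add: signed_perm_def)
  ultimately have "abs ` set xs = {1..int (Suc n)} - {int (Suc n)}" by blast
  also have "\<dots> = {1..int n}" by auto
  finally show ?thesis using len by (simp add: signed_perm_def)
qed

lemma reversals_moving_max_to_end:
  assumes sp: "signed_perm (Suc n) a"
  obtains rs xs where "\<forall>r\<in>set rs. valid_reversal (Suc n) r"
    "apply_reversals a rs = xs @ [int (Suc n)]"
proof -
  have len: "length a = Suc n" using signed_perm_length[OF sp] .
  have "int (Suc n) \<in> set (map abs a)" using sp by (simp add: signed_perm_def)
  then obtain p where p: "p < Suc n" "\<bar>a ! p\<bar> = int (Suc n)"
    using len by (auto simp: in_set_conv_nth)
  define a1 where "a1 = reversal (p + 1) (Suc n) a"
  have v1: "valid_reversal (Suc n) (p + 1, Suc n)" and v2: "valid_reversal (Suc n) (Suc n, Suc n)"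
    using p by (simp_all add: valid_reversal_def)
  have len1: "length a1 = Suc n" unfolding a1_def using length_reversal v1 len by simp
  have a1_last: "a1 ! n = - a ! p"
    unfolding a1_def using nth_reversal[of a "p + 1" "Suc n" n] v1 len p by simp
  have flip_last: "reversal (Suc n) (Suc n) a1 ! n = a ! p"
    using nth_reversal[of a1 "Suc n" "Suc n" n] v2 len1 a1_last by simp
  define rs where "rs = (if a ! p < 0 then [(p + 1, Suc n)] else [(p + 1, Suc n), (Suc n, Suc n)])"
  define a2 where "a2 = apply_reversals a rs"
  have "a2 = (if a ! p < 0 then a1 else reversal (Suc n) (Suc n) a1)"
    by (simp add: a2_def rs_def apply_reversals_def a1_def)
  then have "length a2 = Suc n" "a2 ! n = int (Suc n)"
    using len1 length_reversal[of a1 "Suc n" "Suc n"] v2 a1_last flip_last p(2) by auto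
  then have "a2 = take n a2 @ [int (Suc n)]"
    by (metis lessI take_Suc_conv_app_nth take_all order_refl)
  moreover have "\<forall>r\<in>set rs. valid_reversal (Suc n) r" using v1 v2 by (simp add: rs_def)
  ultimately show ?thesis using that a2_def by metis
qed

lemma exists_sorting_reversals:
  "signed_perm n a \<Longrightarrow>
    \<exists>rs. (\<forall>r\<in>set rs. valid_reversal n r) \<and> apply_reversals a rs = identity_sp n"
proof (induction n arbitrary: a)
  case 0
  then have "a = []" using signed_perm_length by blast
  then show ?case by (intro exI[of _ "[]"]) (simp add: apply_reversals_def identity_sp_def)
next
  case (Suc n)
  obtain rs xs where rs: "\<forall>r\<in>set rs. valid_reversal (Suc n) r"
    and a': "apply_reversals a rs = xs @ [int (Suc n)]"
    using reversals_moving_max_to_end[OF Suc.prems] .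
  have "signed_perm n xs"
    using signed_perm_reversals[OF Suc.prems rs] a' signed_perm_snoc by metis
  then obtain rs' where rs': "\<forall>r\<in>set rs'. valid_reversal n r" "apply_reversals xs rs' = identity_sp n"
    using Suc.IH by blast
  then have "apply_reversals (xs @ [int (Suc n)]) rs' = identity_sp (Suc n)"
    using apply_reversals_append_right[of rs' xs] signed_perm_length[OF \<open>signed_perm n xs\<close>]
    by (simp add: identity_sp_def)
  then have "apply_reversals a (rs @ rs') = identity_sp (Suc n)"
    using a' by (simp add: apply_reversals_def)
  moreover have "\<forall>r\<in>set (rs @ rs'). valid_reversal (Suc n) r"
    using rs rs'(1) by (auto simp: valid_reversal_def)
  ultimately show ?case by blast
qed

lemma sorting_sequence_length_bound:
  assumes "signed_perm n a" "\<forall>r\<in>set rs. valid_reversal n r"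
    "apply_reversals a rs = identity_sp n"
  shows "2 * n + 2 \<le> num_cycles {-(int n + 1)..int n} (theta1 a \<circ> theta2 n) + 2 * length rs"
  using assms
proof (induction rs arbitrary: a)
  case Nil
  then have "a = identity_sp n" by (simp add: apply_reversals_def)
  then show ?case using num_cycles_identity_sp[of n] by (simp add: comp_def)
next
  case (Cons r rs)
  obtain i j where r: "r = (i, j)" by fastforce
  have v: "valid_reversal n (i, j)" using Cons.prems(2) r by simp
  have "apply_reversals (reversal i j a) rs = identity_sp n"
    using Cons.prems(3) r by (simp add: apply_reversals_def)
  then have "2 * n + 2 \<le> num_cycles {-(int n + 1)..int n} (theta1 (reversal i j a) \<circ> theta2 n)
      + 2 * length rs"
    using Cons.IH[OF signed_perm_reversal[OF Cons.prems(1) v]] Cons.prems(2) by (simp add: comp_def)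
  then show ?case using num_cycles_reversal_le[OF Cons.prems(1) v] by (simp add: comp_def)
qed

lemma reversal_distance_witness:
  assumes "signed_perm n a"
  obtains rs where "length rs = reversal_distance a" "\<forall>r\<in>set rs. valid_reversal n r"
    "apply_reversals a rs = identity_sp n"
proof -
  have len: "length a = n" using signed_perm_length[OF assms] .
  have "\<exists>k rs. length rs = k \<and> (\<forall>r\<in>set rs. valid_reversal (length a) r)
      \<and> apply_reversals a rs = identity_sp (length a)"
    using exists_sorting_reversals[OF assms] len by blast
  from LeastI_ex[OF this] show ?thesis
    using that len unfolding reversal_distance_def by blast
qed

theorem proposition1:
  fixes n :: nat and a :: "int list"
  assumes "signed_perm n a"
  shows "real (reversal_distance a)
           \<ge> (2 * real n + 2 - real (num_cycles {-(int n + 1)..int n} (theta1 a \<circ> theta2 n))) / 2"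
proof -
  obtain rs where rs: "length rs = reversal_distance a" "\<forall>r\<in>set rs. valid_reversal n r"
    "apply_reversals a rs = identity_sp n"
    using reversal_distance_witness[OF assms] .
  have "2 * n + 2 \<le> num_cycles {-(int n + 1)..int n} (theta1 a \<circ> theta2 n) + 2 * reversal_distance a"
    using sorting_sequence_length_bound[OF assms rs(2,3)] rs(1) by simp
  then have "real (2 * n + 2)
      \<le> real (num_cycles {-(int n + 1)..int n} (theta1 a \<circ> theta2 n) + 2 * reversal_distance a)"
    by (simp only: of_nat_le_iff)
  then show ?thesis by simp
qed

end
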